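(* With notation as in the context (type $E_6$ over $\mathbb{Z}/3$), let $\alpha$ be a positive root of $E_6$, let $s\in\{1,3,4,5,6\}$ and let $\beta\in\Delta_s^+$. Then $f(\beta)+f(\alpha)\in\Gamma_s^+$ if and only if $\beta+\alpha\in\Delta_s^+$.
   Context: Let $V=(\mathbb{Z}/3)^5$ with the standard symmetric form $\sum_i x_iy_i$. Let $\Delta$ be the root system of type $E_6$ with simple roots $\alpha_1,\dots,\alpha_6$, $\langle\alpha_i,\alpha_i\rangle=2$, $\langle\alpha_i,\alpha_j\rangle=-1$ if $\{i,j\}\in\{\{1,3\},\{3,4\},\{4,5\},\{5,6\},\{2,4\}\}$, $0$ otherwise; $\Lambda=\bigoplus\mathbb{Z}\alpha_i$, $\Delta^+$ the positive roots. Let $f:\Lambda\to V$ be the group homomorphism with $f(\alpha_1)=(1,2,0,0,0)$, $f(\alpha_2)=(0,0,0,1,2)$, $f(\alpha_3)=(0,1,2,0,0)$, $f(\alpha_4)=(0,0,1,2,0)$, $f(\alpha_5)=(0,0,0,1,1)$, $f(\alpha_6)=(1,1,1,1,1)$. For $\beta=\sum\beta^i\alpha_i\in\Delta^+$ let $m(\beta)=\max\{i:\beta^i\ne0\}$; set $\Delta_1^+=\{\alpha_1\}$, $\Delta_3^+=\{\beta: m(\beta)\in\{2,3\}\}$, $\Delta_s^+=\{\beta: m(\beta)=s\}$ for $s=4,5,6$, and $\Gamma_s^+=f(\Delta_s^+)$. *)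

theory Defs
  imports Main
begin

text \<open>Elements of the root lattice Lambda are coefficient vectors with respect to
 the simple roots alpha_1..alpha_6, stored as int lists of length 6
 (list index i-1 holds the coefficient of alpha_i).
 Elements of V = (Z/3)^5 are int lists of length 5 with entries in {0,1,2}
 (canonical representatives mod 3).\<close>

definition e6_adj :: "nat \<Rightarrow> nat \<Rightarrow> bool" where
  "e6_adj i j \<longleftrightarrow> {i, j} \<in> {{1,3},{3,4},{4,5},{5,6},{2,4}}"

definition e6_form :: "nat \<Rightarrow> nat \<Rightarrow> int" where
  "e6_form i j = (if i = j then 2 else if e6_adj i j then -1 else 0)"

definition lat_form :: "int list \<Rightarrow> int list \<Rightarrow> int" where
  "lat_form x y = (\<Sum>i\<in>{1..6}. \<Sum>j\<in>{1..6}. x!(i-1) * e6_form i j * y!(j-1))"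

definition lat_add :: "int list \<Rightarrow> int list \<Rightarrow> int list" where
  "lat_add x y = map2 (+) x y"

definition E6_roots :: "int list set" where
  "E6_roots = {b. length b = 6 \<and> lat_form b b = 2}"

definition E6_pos :: "int list set" where
  "E6_pos = {b \<in> E6_roots. \<forall>i<6. b!i \<ge> 0}"

definition fimg :: "nat \<Rightarrow> int list" where
  "fimg i = (if i = 1 then [1,2,0,0,0] else if i = 2 then [0,0,0,1,2]
     else if i = 3 then [0,1,2,0,0] else if i = 4 then [0,0,1,2,0]
     else if i = 5 then [0,0,0,1,1] else [1,1,1,1,1])"

definition fhom :: "int list \<Rightarrow> int list" where
  "fhom b = map (\<lambda>k. (\<Sum>i\<in>{1..6}. b!(i-1) * fimg i ! k) mod 3) [0..<5]"

definition V_add :: "int list \<Rightarrow> int list \<Rightarrow> int list" where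
  "V_add u v = map2 (\<lambda>a b. (a + b) mod 3) u v"

definition mroot :: "int list \<Rightarrow> nat" where
  "mroot b = Max {i \<in> {1..6}. b!(i-1) \<noteq> 0}"

definition alpha1 :: "int list" where
  "alpha1 = [1,0,0,0,0,0]"

definition Delta :: "nat \<Rightarrow> int list set" where
  "Delta s = (if s = 1 then {alpha1}
     else if s = 3 then {b \<in> E6_pos. mroot b \<in> {2,3}}
     else {b \<in> E6_pos. mroot b = s})"

definition Gamma :: "nat \<Rightarrow> int list set" where
  "Gamma s = fhom ` Delta s"

end

theory Submission
  imports Defs
begin

text \<open>The claim is a finite computation once the positive roots are known. Completing squares
  in the quadratic form bounds the absolute value of every coefficient of a root by the
  corresponding coefficient 1, 2, 2, 3, 2, 1 of the highest root, so the positive roots are the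
  36 points of norm 2 in that box. The sets \<Delta>_s are then explicit, and the equivalence is
  checked pair by pair.\<close>

definition e6_norm :: "int \<Rightarrow> int \<Rightarrow> int \<Rightarrow> int \<Rightarrow> int \<Rightarrow> int \<Rightarrow> int" where
  "e6_norm x1 x2 x3 x4 x5 x6 =
     2 * (x1\<^sup>2 + x2\<^sup>2 + x3\<^sup>2 + x4\<^sup>2 + x5\<^sup>2 + x6\<^sup>2) - 2 * (x1*x3 + x3*x4 + x4*x5 + x5*x6 + x2*x4)"

lemma lat_form_six:
  "lat_form [x1,x2,x3,x4,x5,x6] [x1,x2,x3,x4,x5,x6] = e6_norm x1 x2 x3 x4 x5 x6"
  by (simp add: lat_form_def e6_form_def e6_adj_def e6_norm_def numeral_eq_Suc
      doubleton_eq_iff algebra_simps power2_eq_square)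

lemma abs_le_if_weighted_square_le:
  fixes x k d e :: int
  assumes "d * x\<^sup>2 \<le> e" and "e < d * (k + 1)\<^sup>2" and "0 < d" and "0 \<le> k"
  shows "\<bar>x\<bar> \<le> k"
proof -
  have "d * \<bar>x\<bar>\<^sup>2 < d * (k + 1)\<^sup>2"
    using assms(1,2) by simp
  then have "\<bar>x\<bar>\<^sup>2 < (k + 1)\<^sup>2"
    using assms(3) by simp
  then have "\<bar>x\<bar> < k + 1"
    using power_less_imp_less_base assms(4) by fastforce
  then show ?thesis by simp
qed

text \<open>Each identity completes squares in the form with one variable eliminated last.\<close>

lemma e6_norm_completed_squares:
  fixes x1 x2 x3 x4 x5 x6 :: int
  shows
    "4 * e6_norm x1 x2 x3 x4 x5 x6 = 3 * x1\<^sup>2 + (2 * (2*x2 - x4)\<^sup>2 + 2 * (2*x3 - x4 - x1)\<^sup>2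
      + (2*x4 - 2*x5 - x1)\<^sup>2 + (2*x5 - 2*x6 - x1)\<^sup>2 + (2*x6 - x1)\<^sup>2)"
    "60 * e6_norm x1 x2 x3 x4 x5 x6 = 30 * x2\<^sup>2 + (30 * (2*x1 - x3)\<^sup>2 + 10 * (3*x3 - 2*x4)\<^sup>2
      + 5 * (4*x4 - 3*x5 - 3*x2)\<^sup>2 + 3 * (5*x5 - 4*x6 - 3*x2)\<^sup>2 + 18 * (2*x6 - x2)\<^sup>2)"
    "60 * e6_norm x1 x2 x3 x4 x5 x6 = 18 * x3\<^sup>2 + (30 * (2*x1 - x3)\<^sup>2 + 30 * (2*x2 - x4)\<^sup>2
      + 10 * (3*x4 - 2*x5 - 2*x3)\<^sup>2 + 5 * (4*x5 - 3*x6 - 2*x3)\<^sup>2 + 3 * (5*x6 - 2*x3)\<^sup>2)"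
    "6 * e6_norm x1 x2 x3 x4 x5 x6 = x4\<^sup>2 + (3 * (2*x1 - x3)\<^sup>2 + 3 * (2*x2 - x4)\<^sup>2
      + (3*x3 - 2*x4)\<^sup>2 + 3 * (2*x5 - x6 - x4)\<^sup>2 + (3*x6 - x4)\<^sup>2)"
    "30 * e6_norm x1 x2 x3 x4 x5 x6 = 9 * x5\<^sup>2 + (15 * (2*x1 - x3)\<^sup>2 + 15 * (2*x2 - x4)\<^sup>2
      + 5 * (3*x3 - 2*x4)\<^sup>2 + (5*x4 - 6*x5)\<^sup>2 + 15 * (2*x6 - x5)\<^sup>2)"
    "60 * e6_norm x1 x2 x3 x4 x5 x6 = 45 * x6\<^sup>2 + (30 * (2*x1 - x3)\<^sup>2 + 30 * (2*x2 - x4)\<^sup>2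
      + 10 * (3*x3 - 2*x4)\<^sup>2 + 2 * (5*x4 - 6*x5)\<^sup>2 + 3 * (4*x5 - 5*x6)\<^sup>2)"
  unfolding e6_norm_def by (algebra+)

lemma e6_norm_2_coeff_bounds:
  assumes "e6_norm x1 x2 x3 x4 x5 x6 = 2"
  shows "\<bar>x1\<bar> \<le> 1" "\<bar>x2\<bar> \<le> 2" "\<bar>x3\<bar> \<le> 2" "\<bar>x4\<bar> \<le> 3" "\<bar>x5\<bar> \<le> 2" "\<bar>x6\<bar> \<le> 1"
proof -
  note squares = e6_norm_completed_squares[of x1 x2 x3 x4 x5 x6]
  have "3 * x1\<^sup>2 \<le> 4 * e6_norm x1 x2 x3 x4 x5 x6" by (subst squares(1)) simp
  then show "\<bar>x1\<bar> \<le> 1"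
    using assms by (intro abs_le_if_weighted_square_le[where d = 3 and e = 8]) auto
  have "30 * x2\<^sup>2 \<le> 60 * e6_norm x1 x2 x3 x4 x5 x6" by (subst squares(2)) simp
  then show "\<bar>x2\<bar> \<le> 2"
    using assms by (intro abs_le_if_weighted_square_le[where d = 30 and e = 120]) auto
  have "18 * x3\<^sup>2 \<le> 60 * e6_norm x1 x2 x3 x4 x5 x6" by (subst squares(3)) simp
  then show "\<bar>x3\<bar> \<le> 2"
    using assms by (intro abs_le_if_weighted_square_le[where d = 18 and e = 120]) auto
  have "1 * x4\<^sup>2 \<le> 6 * e6_norm x1 x2 x3 x4 x5 x6" by (subst squares(4)) simp
  then show "\<bar>x4\<bar> \<le> 3"
    using assms by (intro abs_le_if_weighted_square_le[where d = 1 and e = 12]) auto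
  have "9 * x5\<^sup>2 \<le> 30 * e6_norm x1 x2 x3 x4 x5 x6" by (subst squares(5)) simp
  then show "\<bar>x5\<bar> \<le> 2"
    using assms by (intro abs_le_if_weighted_square_le[where d = 9 and e = 60]) auto
  have "45 * x6\<^sup>2 \<le> 60 * e6_norm x1 x2 x3 x4 x5 x6" by (subst squares(6)) simp
  then show "\<bar>x6\<bar> \<le> 1"
    using assms by (intro abs_le_if_weighted_square_le[where d = 45 and e = 120]) auto
qed

definition positive_roots :: "int list list" where
  "positive_roots =
    [[0,0,0,0,0,1], [0,0,0,0,1,0], [0,0,0,0,1,1], [0,0,0,1,0,0], [0,0,0,1,1,0], [0,0,0,1,1,1],
     [0,0,1,0,0,0], [0,0,1,1,0,0], [0,0,1,1,1,0], [0,0,1,1,1,1], [0,1,0,0,0,0], [0,1,0,1,0,0],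
     [0,1,0,1,1,0], [0,1,0,1,1,1], [0,1,1,1,0,0], [0,1,1,1,1,0], [0,1,1,1,1,1], [0,1,1,2,1,0],
     [0,1,1,2,1,1], [0,1,1,2,2,1], [1,0,0,0,0,0], [1,0,1,0,0,0], [1,0,1,1,0,0], [1,0,1,1,1,0],
     [1,0,1,1,1,1], [1,1,1,1,0,0], [1,1,1,1,1,0], [1,1,1,1,1,1], [1,1,1,2,1,0], [1,1,1,2,1,1],
     [1,1,1,2,2,1], [1,1,2,2,1,0], [1,1,2,2,1,1], [1,1,2,2,2,1], [1,1,2,3,2,1], [1,2,2,3,2,1]]"

lemma nonneg_norm_2_in_positive_roots:
  assumes "e6_norm x1 x2 x3 x4 x5 x6 = 2"
    and "0 \<le> x1" "0 \<le> x2" "0 \<le> x3" "0 \<le> x4" "0 \<le> x5" "0 \<le> x6"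
  shows "[x1,x2,x3,x4,x5,x6] \<in> set positive_roots"
proof -
  note bounds = e6_norm_2_coeff_bounds[OF assms(1)]
  have "x1 = 0 \<or> x1 = 1" using bounds(1) assms(2) by auto
  moreover have "x2 = 0 \<or> x2 = 1 \<or> x2 = 2" using bounds(2) assms(3) by auto
  moreover have "x3 = 0 \<or> x3 = 1 \<or> x3 = 2" using bounds(3) assms(4) by auto
  moreover have "x4 = 0 \<or> x4 = 1 \<or> x4 = 2 \<or> x4 = 3" using bounds(4) assms(5) by auto
  moreover have "x5 = 0 \<or> x5 = 1 \<or> x5 = 2" using bounds(5) assms(6) by auto
  moreover have "x6 = 0 \<or> x6 = 1" using bounds(6) assms(7) by auto
  ultimately show ?thesis
    using assms(1) unfolding positive_roots_def e6_norm_def by (elim disjE; simp)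
qed

lemma E6_pos_eq_positive_roots: "E6_pos = set positive_roots"
proof
  show "E6_pos \<subseteq> set positive_roots"
  proof
    fix b assume b: "b \<in> E6_pos"
    then have "length b = 6" by (simp add: E6_pos_def E6_roots_def)
    then obtain x1 x2 x3 x4 x5 x6 where b_eq: "b = [x1,x2,x3,x4,x5,x6]"
      by (auto simp: numeral_eq_Suc length_Suc_conv)
    have nonneg: "\<forall>i<6. b ! i \<ge> 0" using b by (simp add: E6_pos_def)
    have "e6_norm x1 x2 x3 x4 x5 x6 = 2"
      using b by (simp add: b_eq E6_pos_def E6_roots_def lat_form_six)
    moreover from nonneg have "0 \<le> x1" "0 \<le> x2" "0 \<le> x3" "0 \<le> x4" "0 \<le> x5" "0 \<le> x6"
      by (auto simp: b_eq All_less_Suc numeral_eq_Suc)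
    ultimately show "b \<in> set positive_roots"
      unfolding b_eq by (rule nonneg_norm_2_in_positive_roots)
  qed
  show "set positive_roots \<subseteq> E6_pos"
    by (simp add: positive_roots_def E6_pos_def E6_roots_def lat_form_six e6_norm_def
        All_less_Suc numeral_eq_Suc)
qed

lemma mroot_eq_Max_filter: "mroot b = Max (set (filter (\<lambda>i. b ! (i - 1) \<noteq> 0) [1..<7]))"
  unfolding mroot_def by (rule arg_cong[where f = Max]) auto

lemma Delta_1: "Delta 1 = {[1,0,0,0,0,0]}"
  by (simp add: Delta_def alpha1_def)

lemma Delta_3: "Delta 3 = set [[0,0,1,0,0,0], [0,1,0,0,0,0], [1,0,1,0,0,0]]"
  unfolding Delta_def E6_pos_eq_positive_roots positive_roots_def set_filter[symmetric]
    mroot_eq_Max_filter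
  by code_simp

lemma Delta_4:
  "Delta 4 = set [[0,0,0,1,0,0], [0,0,1,1,0,0], [0,1,0,1,0,0], [0,1,1,1,0,0], [1,0,1,1,0,0],
    [1,1,1,1,0,0]]"
  unfolding Delta_def E6_pos_eq_positive_roots positive_roots_def set_filter[symmetric]
    mroot_eq_Max_filter
  by code_simp

lemma Delta_5:
  "Delta 5 = set [[0,0,0,0,1,0], [0,0,0,1,1,0], [0,0,1,1,1,0], [0,1,0,1,1,0], [0,1,1,1,1,0],
    [0,1,1,2,1,0], [1,0,1,1,1,0], [1,1,1,1,1,0], [1,1,1,2,1,0], [1,1,2,2,1,0]]"
  unfolding Delta_def E6_pos_eq_positive_roots positive_roots_def set_filter[symmetric]
    mroot_eq_Max_filter
  by code_simp

lemma Delta_6: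
  "Delta 6 = set [[0,0,0,0,0,1], [0,0,0,0,1,1], [0,0,0,1,1,1], [0,0,1,1,1,1], [0,1,0,1,1,1],
    [0,1,1,1,1,1], [0,1,1,2,1,1], [0,1,1,2,2,1], [1,0,1,1,1,1], [1,1,1,1,1,1], [1,1,1,2,1,1],
    [1,1,1,2,2,1], [1,1,2,2,1,1], [1,1,2,2,2,1], [1,1,2,3,2,1], [1,2,2,3,2,1]]"
  unfolding Delta_def E6_pos_eq_positive_roots positive_roots_def set_filter[symmetric]
    mroot_eq_Max_filter
  by code_simp

definition fhom_detects_sums :: "nat \<Rightarrow> bool" where
  "fhom_detects_sums s \<longleftrightarrow> (\<forall>a \<in> E6_pos. \<forall>b \<in> Delta s.
     V_add (fhom b) (fhom a) \<in> Gamma s \<longleftrightarrow> lat_add b a \<in> Delta s)"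

lemma fhom_detects_sums:
  "fhom_detects_sums 1" "fhom_detects_sums 3" "fhom_detects_sums 4" "fhom_detects_sums 5"
  "fhom_detects_sums 6"
  unfolding fhom_detects_sums_def Gamma_def E6_pos_eq_positive_roots positive_roots_def
    Delta_1 Delta_3 Delta_4 Delta_5 Delta_6 image_set
  by (code_simp+)

theorem mainTheorem17:
  fixes a b :: "int list" and s :: nat
  assumes "a \<in> E6_pos" and "s \<in> {1,3,4,5,6}" and "b \<in> Delta s"
  shows "V_add (fhom b) (fhom a) \<in> Gamma s \<longleftrightarrow> lat_add b a \<in> Delta s"
proof -
  have "fhom_detects_sums s"
    using assms(2) fhom_detects_sums by auto
  then show ?thesis
    using assms(1,3) unfolding fhom_detects_sums_def by blast
qed

end
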